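(* Let $P=\{p_1,\dots,p_n\}$ be weighted points in $\mathbb{R}^d$ with total weight $1$, let $S=\{s_1,\dots,s_m\}$ be $d$-dimensional simplices in $\mathbb{R}^d$ of total volume $1$ with longest edge length $\Delta$, and let $0<\delta\le\frac15$. Let $\tau$ be the transport plan produced by the construction in the context and $\tau^*$ an optimal transport plan between $P$ and $S$. Then $\|\tau\|\le(1+21\delta)\|\tau^*\|$.
   Context: Each simplex's mass equals its volume and is spread uniformly with a common density. A transport plan moves from each point its weight and delivers to the simplices exactly their mass distribution; its cost $\|\tau\|$ is the integral of moved mass times Euclidean distance; $\|\tau^*\|$ is the minimum cost. Construction: (1) Overlay a uniform grid of cubes of side $\Delta$ and keep the cells intersected by some simplex. (2) Repeatedly subdivide each cell into $2^d$ equal subcubes until, for every point of $P$, the ratio of the distances to the furthest and closest point of the cell is at most $1+\delta$, or until the cell lies wholly within Euclidean distance $\delta/(nm)^{1/d}$ of some point of $P$. Let $Q$ be the resulting cells. (3) In each $q\in Q$ pick an arbitrary point with weight equal to the total volume of simplices contained in $q$; call this set $T$. (4) Compute an optimal transport plan $\nu$ between $P$ and $T$. (5) Obtain $\tau$ by spreading the mass sent by $\nu$ to each $t\in T$ uniformly over the parts of simplices contained in the cell from which $t$ was chosen. *)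

theory Defs
  imports "HOL-Analysis.Analysis"
begin

text \<open>A cell is represented by its lower corner a and its side length s; it is the
half-open axis-parallel cube with corner a and side s.\<close>

definition cube :: "'a::euclidean_space \<times> real \<Rightarrow> 'a set" where
  "cube c = {x. \<forall>i\<in>Basis. fst c \<bullet> i \<le> x \<bullet> i \<and> x \<bullet> i < fst c \<bullet> i + snd c}"

definition children :: "'a::euclidean_space \<times> real \<Rightarrow> ('a \<times> real) set" where
  "children c = {(fst c + (\<Sum>b\<in>B. (snd c / 2) *\<^sub>R b), snd c / 2) | B. B \<subseteq> Basis}"

fun active :: "('a::euclidean_space \<times> real \<Rightarrow> bool) \<Rightarrow> nat \<Rightarrow> 'a \<times> real \<Rightarrow> ('a \<times> real) set" where
  "active stp 0 c = {c}"
| "active stp (Suc k) c = \<Union> {children c' | c'. c' \<in> active stp k c \<and> \<not> stp c'}"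

definition simplex_of :: "(nat \<Rightarrow> nat \<Rightarrow> 'a::euclidean_space) \<Rightarrow> nat \<Rightarrow> 'a set" where
  "simplex_of V j = convex hull (V j ` {..DIM('a)})"

definition simplex_measure :: "nat \<Rightarrow> (nat \<Rightarrow> nat \<Rightarrow> 'a::euclidean_space) \<Rightarrow> 'a measure" where
  "simplex_measure m V = density lborel (\<lambda>y. \<Sum>j<m. indicator (simplex_of V j) y)"

definition stop_rule :: "'a::euclidean_space set \<Rightarrow> nat \<Rightarrow> real \<Rightarrow> 'a \<times> real \<Rightarrow> bool" where
  "stop_rule P m \<delta> c \<longleftrightarrow>
     (\<forall>p\<in>P. (SUP x\<in>cube c. dist p x) \<le> (1 + \<delta>) * infdist p (cube c))
   \<or> (\<exists>p\<in>P. cube c \<subseteq> cball p (\<delta> / (real (card P * m)) powr (1 / real DIM('a))))"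

definition grid_cells :: "'a::euclidean_space \<Rightarrow> real \<Rightarrow> nat \<Rightarrow> (nat \<Rightarrow> nat \<Rightarrow> 'a) \<Rightarrow> ('a \<times> real) set" where
  "grid_cells org \<Delta> m V = {(a, \<Delta>) | a. (\<forall>i\<in>Basis. \<exists>k::int. a \<bullet> i = org \<bullet> i + of_int k * \<Delta>)
       \<and> (\<exists>j<m. cube (a, \<Delta>) \<inter> simplex_of V j \<noteq> {})}"

definition final_cells :: "'a::euclidean_space set \<Rightarrow> nat \<Rightarrow> (nat \<Rightarrow> nat \<Rightarrow> 'a) \<Rightarrow> real \<Rightarrow> 'a \<Rightarrow> real \<Rightarrow> ('a \<times> real) set" where
  "final_cells P m V \<Delta> org \<delta> =
     {c'. \<exists>c\<in>grid_cells org \<Delta> m V. \<exists>k. c' \<in> active (stop_rule P m \<delta>) k c \<and> stop_rule P m \<delta> c'}"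

definition cell_weight :: "nat \<Rightarrow> (nat \<Rightarrow> nat \<Rightarrow> 'a::euclidean_space) \<Rightarrow> 'a \<times> real \<Rightarrow> real" where
  "cell_weight m V q = measure (simplex_measure m V) (cube q)"

definition discrete_plan :: "'a set \<Rightarrow> ('a \<Rightarrow> real) \<Rightarrow> 'c set \<Rightarrow> ('c \<Rightarrow> real) \<Rightarrow> ('a \<Rightarrow> 'c \<Rightarrow> real) \<Rightarrow> bool" where
  "discrete_plan P w Q W \<nu> \<longleftrightarrow>
     (\<forall>p\<in>P. \<forall>q\<in>Q. 0 \<le> \<nu> p q) \<and> (\<forall>p\<in>P. (\<Sum>q\<in>Q. \<nu> p q) = w p) \<and> (\<forall>q\<in>Q. (\<Sum>p\<in>P. \<nu> p q) = W q)"

definition discrete_cost :: "'a::metric_space set \<Rightarrow> 'c set \<Rightarrow> ('c \<Rightarrow> 'a) \<Rightarrow> ('a \<Rightarrow> 'c \<Rightarrow> real) \<Rightarrow> real" where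
  "discrete_cost P Q t \<nu> = (\<Sum>p\<in>P. \<Sum>q\<in>Q. \<nu> p q * dist p (t q))"

text \<open>Transport plans between weighted points P and a target measure \<mu>: each point p
sends its weight w p according to the measure \<pi> p; together they deliver exactly \<mu>.\<close>
definition transport_plan :: "'a::euclidean_space set \<Rightarrow> ('a \<Rightarrow> real) \<Rightarrow> 'a measure \<Rightarrow> ('a \<Rightarrow> 'a measure) \<Rightarrow> bool" where
  "transport_plan P w \<mu> \<pi> \<longleftrightarrow>
     (\<forall>p\<in>P. sets (\<pi> p) = sets borel \<and> emeasure (\<pi> p) (space (\<pi> p)) = ennreal (w p))
   \<and> (\<forall>A\<in>sets borel. (\<Sum>p\<in>P. emeasure (\<pi> p) A) = emeasure \<mu> A)"

definition plan_cost :: "'a::euclidean_space set \<Rightarrow> ('a \<Rightarrow> 'a measure) \<Rightarrow> ennreal" where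
  "plan_cost P \<pi> = (\<Sum>p\<in>P. \<integral>\<^sup>+ y. ennreal (dist p y) \<partial>\<pi> p)"

definition constructed_plan :: "nat \<Rightarrow> (nat \<Rightarrow> nat \<Rightarrow> 'a::euclidean_space) \<Rightarrow> ('a \<times> real) set
     \<Rightarrow> ('a \<Rightarrow> 'a \<times> real \<Rightarrow> real) \<Rightarrow> 'a \<Rightarrow> 'a measure" where
  "constructed_plan m V Q \<nu> p = density (simplex_measure m V)
     (\<lambda>y. \<Sum>q\<in>Q. ennreal (\<nu> p q / cell_weight m V q) * indicator (cube q) y)"

end

theory Submission
  imports Defs
begin

(* Every final cell q satisfies one of the two stopping alternatives, so for p in P and y, y' in q
   we have dist p y <= (1 + delta) dist p y' + e q, where e q = 0 if the distance ratio test holds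
   and e q = 2 eps otherwise, eps = delta / (nm)^(1/d) being the stopping radius.  Spreading nu over
   the cells therefore costs at most (1 + delta) ||nu|| + E with E = sum_q e q vol(q).  Conversely,
   discretising any transport plan pi onto the cells gives a discrete plan of cost at most
   (1 + delta) ||pi|| + E, so optimality of nu yields ||tau|| <= (1 + delta)^2 ||pi|| + (2 + delta) E.
   The cells with e q > 0 lie in n balls of radius eps, which carry simplex mass at most
   nm (2 eps)^d, whence E <= 4 delta^2 / (nm)^(1/d).  By the same volume bound at most half of the
   unit mass lies within distance 1 / (4 (nm)^(1/d)) of P, so ||pi|| >= 1 / (8 (nm)^(1/d)) and
   E <= 32 delta^2 ||pi||.  Finally (1 + delta)^2 + 32 delta^2 (2 + delta) <= 1 + 21 delta for
   delta <= 1/5. *)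

lemma cube_borel [measurable]: "cube c \<in> sets borel"
  unfolding cube_def by measurable

lemma cube_eq_empty: "snd c \<le> 0 \<Longrightarrow> cube c = {}"
  unfolding cube_def using SOME_Basis by fastforce

lemma inner_add_sum_Basis:
  fixes a :: "'a::euclidean_space"
  assumes "B \<subseteq> Basis" "i \<in> Basis"
  shows "(a + (\<Sum>b\<in>B. s *\<^sub>R b)) \<bullet> i = a \<bullet> i + (if i \<in> B then s else 0)"
proof -
  have "(\<Sum>b\<in>B. s *\<^sub>R b) \<bullet> i = (\<Sum>b\<in>B. if b = i then s else 0)"
    using assms by (auto simp: inner_sum_left inner_Basis intro!: sum.cong)
  also have "\<dots> = (if i \<in> B then s else 0)"
    using finite_subset[OF assms(1) finite_Basis] by simp
  finally show ?thesis by (simp add: inner_add_left)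
qed

lemma children_cube_subset: "c' \<in> children c \<Longrightarrow> cube c' \<subseteq> cube c"
  by (force simp: children_def cube_def inner_add_sum_Basis split: if_splits)

definition grid_point :: "'a::euclidean_space \<Rightarrow> real \<Rightarrow> 'a \<Rightarrow> bool" where
  "grid_point org s a \<longleftrightarrow> (\<forall>i\<in>Basis. \<exists>z::int. a \<bullet> i = org \<bullet> i + of_int z * s)"

lemma grid_point_halve: "grid_point org s a \<Longrightarrow> grid_point org (s / 2) a"
  unfolding grid_point_def by (metis mult.commute of_int_mult of_int_numeral times_divide_eq_left
      nonzero_mult_div_cancel_left zero_neq_numeral)

lemma grid_cube_unique:
  assumes "0 < s" "grid_point org s a" "grid_point org s b" "x \<in> cube (a, s)" "x \<in> cube (b, s)"
  shows "a = b"
proof (rule euclidean_eqI)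
  fix i :: 'a assume i: "i \<in> Basis"
  obtain z1 :: int where z1: "a \<bullet> i = org \<bullet> i + of_int z1 * s"
    using assms(2) i by (auto simp: grid_point_def)
  obtain z2 :: int where z2: "b \<bullet> i = org \<bullet> i + of_int z2 * s"
    using assms(3) i by (auto simp: grid_point_def)
  have "a \<bullet> i \<le> x \<bullet> i" "x \<bullet> i < a \<bullet> i + s" "b \<bullet> i \<le> x \<bullet> i" "x \<bullet> i < b \<bullet> i + s"
    using assms(4,5) i by (auto simp: cube_def)
  then have "of_int z1 * s < (of_int z2 + 1) * s" "of_int z2 * s < (of_int z1 + 1) * s"
    using z1 z2 by (auto simp: algebra_simps)
  then have "z1 = z2"
    using \<open>0 < s\<close> by (simp add: mult_less_cancel_right)
  then show "a \<bullet> i = b \<bullet> i" using z1 z2 by simp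
qed

lemma active_grid_point:
  assumes "c \<in> active stp k g" "snd g = s" "grid_point org s (fst g)"
  shows "snd c = s / 2^k \<and> grid_point org (s / 2^k) (fst c)"
  using assms(1)
proof (induction k arbitrary: c)
  case 0
  then show ?case using assms(2,3) by simp
next
  case (Suc k)
  then obtain c' where "c' \<in> active stp k g" "c \<in> children c'"
    by auto
  then obtain B where c': "c' \<in> active stp k g" "B \<subseteq> Basis"
    and c: "c = (fst c' + (\<Sum>b\<in>B. (snd c' / 2) *\<^sub>R b), snd c' / 2)"
    unfolding children_def by blast
  have IH: "snd c' = s / 2^k" "grid_point org (s / 2^k) (fst c')"
    using Suc.IH[OF c'(1)] by auto
  have "grid_point org (s / 2^Suc k) (fst c)"
    unfolding grid_point_def
  proof
    fix i :: 'a assume i: "i \<in> Basis"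
    obtain z :: int where z: "fst c' \<bullet> i = org \<bullet> i + of_int z * (s / 2^k / 2)"
      using grid_point_halve[OF IH(2)] i unfolding grid_point_def by blast
    have "fst c \<bullet> i = fst c' \<bullet> i + (if i \<in> B then snd c' / 2 else 0)"
      using c inner_add_sum_Basis[OF c'(2) i] by simp
    then show "\<exists>z::int. fst c \<bullet> i = org \<bullet> i + of_int z * (s / 2^Suc k)"
      using z IH(1) by (intro exI[of _ "if i \<in> B then z + 1 else z"]) (simp add: field_simps)
  qed
  then show ?case using c IH(1) by simp
qed

lemma active_ancestor:
  assumes "c \<in> active stp k g" "j < k"
  shows "\<exists>a\<in>active stp j g. \<not> stp a \<and> cube c \<subseteq> cube a"
  using assms
proof (induction k arbitrary: c)
  case (Suc k)
  then obtain c' where c': "c' \<in> active stp k g" "\<not> stp c'" "c \<in> children c'"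
    by auto
  have "cube c \<subseteq> cube c'"
    by (rule children_cube_subset[OF c'(3)])
  show ?case
  proof (cases "j < k")
    case True
    with Suc.IH[OF c'(1)] \<open>cube c \<subseteq> cube c'\<close> show ?thesis by blast
  next
    case False
    with Suc.prems(2) c' \<open>cube c \<subseteq> cube c'\<close> show ?thesis
      by (metis less_antisym)
  qed
qed simp

lemma active_cells_meet_eq:
  assumes c1: "c1 \<in> active stp k g1" and c2: "c2 \<in> active stp' k g2"
    and g: "snd g1 = s" "grid_point org s (fst g1)" "snd g2 = s" "grid_point org s (fst g2)"
    and x: "x \<in> cube c1" "x \<in> cube c2"
  shows "c1 = c2"
proof -
  have c1': "snd c1 = s / 2^k" "grid_point org (s / 2^k) (fst c1)"
    using active_grid_point[OF c1 g(1,2)] by auto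
  have c2': "snd c2 = s / 2^k" "grid_point org (s / 2^k) (fst c2)"
    using active_grid_point[OF c2 g(3,4)] by auto
  have "0 < s / 2^k"
    using x(1) cube_eq_empty[of c1] c1'(1) by force
  then have "fst c1 = fst c2"
    using grid_cube_unique[OF _ c1'(2) c2'(2)] x c1'(1) c2'(1) by (metis prod.collapse)
  with c1'(1) c2'(1) show ?thesis
    by (simp add: prod_eq_iff)
qed

lemma stopped_active_cells_meet_eq:
  assumes c1: "c1 \<in> active stp k1 g1" "stp c1" and c2: "c2 \<in> active stp k2 g2" and "k1 \<le> k2"
    and g: "snd g1 = s" "grid_point org s (fst g1)" "snd g2 = s" "grid_point org s (fst g2)"
    and x: "x \<in> cube c1" "x \<in> cube c2"
  shows "c1 = c2"
proof (cases "k1 = k2")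
  case True
  then show ?thesis
    using active_cells_meet_eq[OF c1(1) _ g x] c2 by blast
next
  case False
  then obtain a where a: "a \<in> active stp k1 g2" "\<not> stp a" "cube c2 \<subseteq> cube a"
    using active_ancestor[OF c2, of k1] \<open>k1 \<le> k2\<close> by auto
  then have "c1 = a"
    using active_cells_meet_eq[OF c1(1) a(1) g] x by blast
  with c1(2) a(2) show ?thesis by blast
qed

lemma final_cells_disjoint: "disjoint_family_on cube (final_cells P m V \<Delta> org \<delta>)"
  unfolding disjoint_family_on_def
proof (intro ballI impI equals0I)
  fix c1 c2 x
  assume c: "c1 \<in> final_cells P m V \<Delta> org \<delta>" "c2 \<in> final_cells P m V \<Delta> org \<delta>" "c1 \<noteq> c2"
    and "x \<in> cube c1 \<inter> cube c2"
  then have x: "x \<in> cube c1" "x \<in> cube c2" by auto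
  let ?stp = "stop_rule P m \<delta>"
  obtain g1 k1 where g1: "snd g1 = \<Delta>" "grid_point org \<Delta> (fst g1)" "c1 \<in> active ?stp k1 g1" "?stp c1"
    using c(1) unfolding final_cells_def grid_cells_def grid_point_def by force
  obtain g2 k2 where g2: "snd g2 = \<Delta>" "grid_point org \<Delta> (fst g2)" "c2 \<in> active ?stp k2 g2" "?stp c2"
    using c(2) unfolding final_cells_def grid_cells_def grid_point_def by force
  show False
  proof (cases "k1 \<le> k2")
    case True
    then show False
      using stopped_active_cells_meet_eq[OF g1(3,4) g2(3) _ g1(1,2) g2(1,2) x] c(3) by blast
  next
    case False
    then show False
      using stopped_active_cells_meet_eq[OF g2(3,4) g1(3) _ g2(1,2) g1(1,2) x(2,1)] c(3) by simp
  qed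
qed

lemma bounded_cube: "bounded (cube c)"
proof (rule bounded_subset[OF bounded_cbox])
  show "cube c \<subseteq> cbox (fst c) (fst c + snd c *\<^sub>R One)"
    by (auto simp: cube_def mem_box inner_add_left less_imp_le)
qed

lemma bdd_above_dist_cube: "bdd_above (dist p ` cube c)"
proof -
  have "bounded ((\<lambda>x. x - p) ` cube c)"
    using bounded_cube by (rule bounded_translation_minus)
  then show ?thesis
    by (simp add: bdd_above_norm[symmetric] image_image dist_norm norm_minus_commute)
qed

definition separated_cell :: "'a::euclidean_space set \<Rightarrow> real \<Rightarrow> 'a \<times> real \<Rightarrow> bool" where
  "separated_cell P \<delta> c \<longleftrightarrow> (\<forall>p\<in>P. (SUP x\<in>cube c. dist p x) \<le> (1 + \<delta>) * infdist p (cube c))"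

definition stop_radius :: "'a::euclidean_space set \<Rightarrow> nat \<Rightarrow> real \<Rightarrow> real" where
  "stop_radius P m \<delta> = \<delta> / real (card P * m) powr (1 / real DIM('a))"

definition cell_slack :: "'a::euclidean_space set \<Rightarrow> nat \<Rightarrow> real \<Rightarrow> 'a \<times> real \<Rightarrow> real" where
  "cell_slack P m \<delta> c = (if separated_cell P \<delta> c then 0 else 2 * stop_radius P m \<delta>)"

lemma stop_rule_iff:
  "stop_rule P m \<delta> c \<longleftrightarrow> separated_cell P \<delta> c \<or> (\<exists>p\<in>P. cube c \<subseteq> cball p (stop_radius P m \<delta>))"
  by (simp add: stop_rule_def separated_cell_def stop_radius_def)

lemma stop_radius_nonneg: "0 \<le> \<delta> \<Longrightarrow> 0 \<le> stop_radius P m \<delta>"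
  by (simp add: stop_radius_def)

lemma cell_slack_nonneg: "0 \<le> \<delta> \<Longrightarrow> 0 \<le> cell_slack P m \<delta> c"
  by (simp add: cell_slack_def stop_radius_nonneg)

lemma stop_rule_dist_le:
  assumes stop: "stop_rule P m \<delta> c" and "p \<in> P" "y \<in> cube c" "y' \<in> cube c" "0 \<le> \<delta>"
  shows "dist p y \<le> (1 + \<delta>) * dist p y' + cell_slack P m \<delta> c"
proof (cases "separated_cell P \<delta> c")
  case True
  have "dist p y \<le> (SUP x\<in>cube c. dist p x)"
    using \<open>y \<in> cube c\<close> bdd_above_dist_cube by (rule cSUP_upper)
  also have "\<dots> \<le> (1 + \<delta>) * infdist p (cube c)"
    using True \<open>p \<in> P\<close> by (auto simp: separated_cell_def)
  also have "\<dots> \<le> (1 + \<delta>) * dist p y'"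
    using infdist_le[OF \<open>y' \<in> cube c\<close>] \<open>0 \<le> \<delta>\<close> by (intro mult_left_mono) auto
  finally show ?thesis
    using True by (simp add: cell_slack_def)
next
  case False
  then obtain p0 where "cube c \<subseteq> cball p0 (stop_radius P m \<delta>)"
    using stop by (auto simp: stop_rule_iff)
  then have "dist p0 y \<le> stop_radius P m \<delta>" "dist p0 y' \<le> stop_radius P m \<delta>"
    using \<open>y \<in> cube c\<close> \<open>y' \<in> cube c\<close> by auto
  then have "dist y y' \<le> 2 * stop_radius P m \<delta>"
    using dist_triangle2[of y y' p0] by (simp add: dist_commute)
  moreover have "dist p y \<le> dist p y' + dist y y'"
    using dist_triangle[of p y y'] by (simp add: dist_commute)
  moreover have "0 \<le> \<delta> * dist p y'"
    using \<open>0 \<le> \<delta>\<close> by simp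
  ultimately show ?thesis
    using False by (simp add: cell_slack_def algebra_simps)
qed

lemma simplex_of_borel [measurable]: "simplex_of V j \<in> sets borel"
  unfolding simplex_of_def
  by (intro borel_closed compact_imp_closed compact_convex_hull finite_imp_compact) auto

lemma sets_simplex_measure [simp]: "sets (simplex_measure m V) = sets borel"
  by (simp add: simplex_measure_def)

lemma space_simplex_measure [simp]: "space (simplex_measure m V) = UNIV"
  by (simp add: simplex_measure_def)

lemma measurable_simplex_measure_iff [simp]:
  "f \<in> borel_measurable (simplex_measure m V) \<longleftrightarrow> f \<in> borel_measurable borel"
  by (simp only: measurable_cong_sets[OF sets_simplex_measure refl])

lemma emeasure_simplex_measure:
  "A \<in> sets borel \<Longrightarrow>
    emeasure (simplex_measure m V) A = (\<Sum>j<m. emeasure lborel (simplex_of V j \<inter> A))"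
  unfolding simplex_measure_def
  by (simp add: emeasure_density sum_distrib_right nn_integral_sum indicator_inter_arith[symmetric])

lemma finite_measure_simplex_measure: "finite_measure (simplex_measure m V)"
proof (rule finite_measureI)
  have "emeasure lborel (simplex_of V j) < \<infinity>" for j
    unfolding simplex_of_def
    by (intro emeasure_bounded_finite compact_imp_bounded compact_convex_hull finite_imp_compact) auto
  then show "emeasure (simplex_measure m V) (space (simplex_measure m V)) \<noteq> \<infinity>"
    by (simp add: emeasure_simplex_measure sum_Pinfty less_top)
qed

lemma emeasure_simplex_measure_le:
  assumes "A \<in> sets borel"
  shows "emeasure (simplex_measure m V) A \<le> of_nat m * emeasure lborel A"
proof -
  have "(\<Sum>j<m. emeasure lborel (simplex_of V j \<inter> A)) \<le> (\<Sum>j<m. emeasure lborel A)"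
    using assms by (intro sum_mono emeasure_mono) auto
  then show ?thesis
    using assms by (simp add: emeasure_simplex_measure)
qed

lemma emeasure_lborel_cball_le:
  fixes p :: "'a::euclidean_space"
  assumes "0 \<le> r"
  shows "emeasure lborel (cball p r) \<le> ennreal ((2 * r) ^ DIM('a))"
proof -
  have "cball p r \<subseteq> cbox (p - r *\<^sub>R One) (p + r *\<^sub>R One)"
  proof
    fix x assume "x \<in> cball p r"
    then have "\<forall>i\<in>Basis. \<bar>(x - p) \<bullet> i\<bar> \<le> r"
      using Basis_le_norm[of _ "x - p"] by (force simp: dist_norm norm_minus_commute)
    then show "x \<in> cbox (p - r *\<^sub>R One) (p + r *\<^sub>R One)"
      by (auto simp: mem_box inner_diff_left inner_add_left abs_le_iff)
  qed
  then have "emeasure lborel (cball p r) \<le> emeasure lborel (cbox (p - r *\<^sub>R One) (p + r *\<^sub>R One))"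
    by (intro emeasure_mono) auto
  also have "\<dots> = ennreal ((2 * r) ^ DIM('a))"
    using assms by (simp add: emeasure_lborel_cbox_eq inner_diff_left inner_add_left)
  finally show ?thesis .
qed

lemma measure_simplex_measure_cball_le:
  fixes p :: "'a::euclidean_space"
  assumes "0 \<le> r"
  shows "measure (simplex_measure m V) (cball p r) \<le> real m * (2 * r) ^ DIM('a)"
proof -
  have "emeasure (simplex_measure m V) (cball p r) \<le> of_nat m * emeasure lborel (cball p r)"
    by (rule emeasure_simplex_measure_le) auto
  also have "\<dots> \<le> of_nat m * ennreal ((2 * r) ^ DIM('a))"
    using emeasure_lborel_cball_le[OF assms] by (intro mult_left_mono) auto
  also have "\<dots> = ennreal (real m * (2 * r) ^ DIM('a))"
    using assms by (simp add: ennreal_mult ennreal_of_nat_eq_real_of_nat)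
  finally show ?thesis
    using assms by (simp add: finite_measure.emeasure_eq_measure[OF finite_measure_simplex_measure])
qed

lemma
  assumes "transport_plan P w \<mu> \<pi>" "p \<in> P"
  shows transport_plan_sets: "sets (\<pi> p) = sets borel"
    and transport_plan_space: "space (\<pi> p) = UNIV"
    and transport_plan_finite_measure: "finite_measure (\<pi> p)"
proof -
  show "sets (\<pi> p) = sets borel"
    using assms by (simp add: transport_plan_def)
  then show "space (\<pi> p) = UNIV"
    using sets_eq_imp_space_eq by fastforce
  show "finite_measure (\<pi> p)"
    using assms by (intro finite_measureI) (simp add: transport_plan_def)
qed

lemma transport_plan_measure_UNIV:
  assumes "transport_plan P w \<mu> \<pi>" "p \<in> P" "0 \<le> w p"
  shows "measure (\<pi> p) UNIV = w p"
proof -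
  have "emeasure (\<pi> p) (space (\<pi> p)) = ennreal (w p)"
    using assms by (simp add: transport_plan_def)
  then show ?thesis
    using transport_plan_space[OF assms(1,2)] assms(3) by (simp add: measure_def)
qed

lemma transport_plan_emeasure_target:
  assumes "transport_plan P w \<mu> \<pi>" "A \<in> sets borel"
  shows "emeasure \<mu> A = ennreal (\<Sum>p\<in>P. measure (\<pi> p) A)"
proof -
  have "emeasure \<mu> A = (\<Sum>p\<in>P. emeasure (\<pi> p) A)"
    using assms by (simp add: transport_plan_def)
  also have "\<dots> = (\<Sum>p\<in>P. ennreal (measure (\<pi> p) A))"
    using finite_measure.emeasure_eq_measure[OF transport_plan_finite_measure[OF assms(1)]]
    by (intro sum.cong) auto
  finally show ?thesis
    by simp
qed

lemma transport_plan_measure_target: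
  "transport_plan P w \<mu> \<pi> \<Longrightarrow> A \<in> sets borel \<Longrightarrow> measure \<mu> A = (\<Sum>p\<in>P. measure (\<pi> p) A)"
  by (simp add: measure_def transport_plan_emeasure_target sum_nonneg)

lemma transport_plan_measure_le_target:
  assumes "transport_plan P w \<mu> \<pi>" "finite P" "p \<in> P" "A \<in> sets borel"
  shows "measure (\<pi> p) A \<le> measure \<mu> A"
  using assms by (simp add: transport_plan_measure_target) (intro member_le_sum; simp)

lemma discrete_plan_total_weight:
  assumes "discrete_plan P w Q W \<nu>"
  shows "(\<Sum>q\<in>Q. W q) = (\<Sum>p\<in>P. w p)"
proof -
  have "(\<Sum>q\<in>Q. W q) = (\<Sum>q\<in>Q. \<Sum>p\<in>P. \<nu> p q)"
    using assms by (simp add: discrete_plan_def)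
  also have "\<dots> = (\<Sum>p\<in>P. \<Sum>q\<in>Q. \<nu> p q)"
    by (rule sum.swap)
  also have "\<dots> = (\<Sum>p\<in>P. w p)"
    using assms by (simp add: discrete_plan_def)
  finally show ?thesis .
qed

lemma discrete_plan_finite_target:
  "discrete_plan P w Q W \<nu> \<Longrightarrow> p \<in> P \<Longrightarrow> w p \<noteq> 0 \<Longrightarrow> finite Q"
  by (metis discrete_plan_def sum.infinite)

lemma discrete_plan_of_transport_plan:
  assumes plan: "transport_plan P w \<mu> \<pi>" and "finite P" "finite Q" "\<forall>p\<in>P. 0 \<le> w p"
    and cells: "\<And>q. C q \<in> sets borel" "disjoint_family_on C Q"
    and total: "(\<Sum>q\<in>Q. measure \<mu> (C q)) = (\<Sum>p\<in>P. w p)"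
  shows "discrete_plan P w Q (\<lambda>q. measure \<mu> (C q)) (\<lambda>p q. measure (\<pi> p) (C q))"
proof -
  have union: "(\<Sum>q\<in>Q. measure (\<pi> p) (C q)) = measure (\<pi> p) (\<Union>q\<in>Q. C q)" if "p \<in> P" for p
  proof -
    have "C ` Q \<subseteq> sets (\<pi> p)"
      using transport_plan_sets[OF plan that] cells(1) by auto
    then show ?thesis
      using finite_measure.finite_measure_finite_Union[OF transport_plan_finite_measure[OF plan that]
          \<open>finite Q\<close> _ cells(2)] by simp
  qed
  have "(\<Sum>p\<in>P. measure (\<pi> p) (\<Union>q\<in>Q. C q)) = (\<Sum>q\<in>Q. \<Sum>p\<in>P. measure (\<pi> p) (C q))"
    using union by (simp add: sum.swap[of _ P])
  also have "\<dots> = (\<Sum>p\<in>P. w p)"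
    using total cells(1) plan by (simp add: transport_plan_measure_target)
  finally have "(\<Sum>p\<in>P. measure (\<pi> p) (\<Union>q\<in>Q. C q)) = (\<Sum>p\<in>P. w p)" .
  \<comment> \<open>Each \<open>\<pi> p\<close> has total mass \<open>w p\<close>, so equality of the sums forces every \<open>\<pi> p\<close> to
      be concentrated on the cells.\<close>
  moreover have "measure (\<pi> p) (\<Union>q\<in>Q. C q) \<le> w p" if "p \<in> P" for p
    using finite_measure.bounded_measure[OF transport_plan_finite_measure[OF plan that]]
      transport_plan_space[OF plan that] transport_plan_measure_UNIV[OF plan that] assms(4) that
    by simp
  ultimately have "measure (\<pi> p) (\<Union>q\<in>Q. C q) = w p" if "p \<in> P" for p
    using sum_mono_inv[OF _ _ that \<open>finite P\<close>] by blast
  then show ?thesis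
    using union cells(1) plan by (simp add: discrete_plan_def transport_plan_measure_target)
qed

lemma nn_integral_dist_cells_le:
  assumes plan: "transport_plan P w \<mu> \<pi>" and "p \<in> P" "finite Q"
    and cells: "\<And>q. C q \<in> sets borel" "disjoint_family_on C Q"
    and dist: "\<And>q y. q \<in> Q \<Longrightarrow> y \<in> C q \<Longrightarrow> dist p (t q) \<le> a * dist p y + e q"
    and "0 \<le> a" "\<And>q. 0 \<le> e q"
  shows "(\<Sum>q\<in>Q. ennreal (dist p (t q)) * emeasure (\<pi> p) (C q))
    \<le> ennreal a * (\<integral>\<^sup>+ y. ennreal (dist p y) \<partial>\<pi> p) + (\<Sum>q\<in>Q. ennreal (e q) * emeasure (\<pi> p) (C q))"
proof -
  have meas: "f \<in> borel_measurable (\<pi> p)" if "f \<in> borel_measurable borel" for f :: "'a \<Rightarrow> ennreal"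
    using that measurable_cong_sets[OF transport_plan_sets[OF plan \<open>p \<in> P\<close>] refl] by blast
  have dist_meas: "(\<lambda>y. ennreal (dist p y)) \<in> borel_measurable (\<pi> p)"
    by (rule meas) measurable
  have sets: "C q \<in> sets (\<pi> p)" for q
    using cells(1) transport_plan_sets[OF plan \<open>p \<in> P\<close>] by simp
  have pointwise: "(\<Sum>q\<in>Q. ennreal (dist p (t q)) * indicator (C q) y)
      \<le> ennreal a * ennreal (dist p y) + (\<Sum>q\<in>Q. ennreal (e q) * indicator (C q) y)" for y
  proof (cases "\<exists>q\<in>Q. y \<in> C q")
    case True
    then obtain q where "q \<in> Q" "y \<in> C q" by blast
    then have "ennreal (dist p (t q)) \<le> ennreal (a * dist p y + e q)"
      using dist by (intro ennreal_leI) auto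
    then show ?thesis
      using \<open>0 \<le> a\<close> \<open>0 \<le> e q\<close>
      unfolding sum_indicator_disjoint_family[OF cells(2) \<open>y \<in> C q\<close> \<open>finite Q\<close> \<open>q \<in> Q\<close>]
      by (simp add: ennreal_mult)
  next
    case False
    then show ?thesis by (simp add: indicator_def)
  qed
  have "(\<Sum>q\<in>Q. ennreal (dist p (t q)) * emeasure (\<pi> p) (C q))
      = (\<integral>\<^sup>+ y. (\<Sum>q\<in>Q. ennreal (dist p (t q)) * indicator (C q) y) \<partial>\<pi> p)"
    using sets cells(1) by (simp add: nn_integral_sum meas nn_integral_cmult_indicator)
  also have "\<dots> \<le> (\<integral>\<^sup>+ y. ennreal a * ennreal (dist p y) + (\<Sum>q\<in>Q. ennreal (e q) * indicator (C q) y) \<partial>\<pi> p)"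
    using pointwise by (rule nn_integral_mono)
  also have "\<dots> = ennreal a * (\<integral>\<^sup>+ y. ennreal (dist p y) \<partial>\<pi> p) + (\<Sum>q\<in>Q. ennreal (e q) * emeasure (\<pi> p) (C q))"
    using sets cells(1)
    by (simp add: nn_integral_add nn_integral_cmult nn_integral_sum meas dist_meas
        nn_integral_cmult_indicator)
  finally show ?thesis .
qed

lemma discrete_cost_of_transport_plan_le:
  assumes plan: "transport_plan P w \<mu> \<pi>" and "finite Q"
    and cells: "\<And>q. C q \<in> sets borel" "disjoint_family_on C Q"
    and dist: "\<And>p q y. p \<in> P \<Longrightarrow> q \<in> Q \<Longrightarrow> y \<in> C q \<Longrightarrow> dist p (t q) \<le> a * dist p y + e q"
    and "0 \<le> a" "\<And>q. 0 \<le> e q"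
  shows "ennreal (discrete_cost P Q t (\<lambda>p q. measure (\<pi> p) (C q)))
    \<le> ennreal a * plan_cost P \<pi> + ennreal (\<Sum>q\<in>Q. e q * measure \<mu> (C q))"
proof -
  have emeasure_eq: "emeasure (\<pi> p) (C q) = ennreal (measure (\<pi> p) (C q))" if "p \<in> P" for p q
    using finite_measure.emeasure_eq_measure[OF transport_plan_finite_measure[OF plan that]] .
  have "ennreal (discrete_cost P Q t (\<lambda>p q. measure (\<pi> p) (C q)))
      = (\<Sum>p\<in>P. \<Sum>q\<in>Q. ennreal (dist p (t q)) * emeasure (\<pi> p) (C q))"
    by (simp add: discrete_cost_def emeasure_eq sum_nonneg ennreal_mult' mult.commute
        flip: sum_ennreal)
  also have "\<dots> \<le> (\<Sum>p\<in>P. ennreal a * (\<integral>\<^sup>+ y. ennreal (dist p y) \<partial>\<pi> p)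
      + (\<Sum>q\<in>Q. ennreal (e q) * emeasure (\<pi> p) (C q)))"
    using nn_integral_dist_cells_le[OF plan _ \<open>finite Q\<close> cells dist] assms(6,7)
    by (intro sum_mono) auto
  also have "\<dots> = ennreal a * plan_cost P \<pi> + ennreal (\<Sum>q\<in>Q. e q * (\<Sum>p\<in>P. measure (\<pi> p) (C q)))"
    using assms(7)
    by (simp add: plan_cost_def sum.distrib sum_distrib_left emeasure_eq sum_nonneg ennreal_mult'
        sum.swap[of _ P] flip: sum_ennreal)
  also have "\<dots> = ennreal a * plan_cost P \<pi> + ennreal (\<Sum>q\<in>Q. e q * measure \<mu> (C q))"
    using cells(1) by (simp add: transport_plan_measure_target[OF plan])
  finally show ?thesis .
qed

lemma nn_integral_dist_ge_mass_outside_ball: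
  assumes plan: "transport_plan P w \<mu> \<pi>" and "p \<in> P" "0 \<le> w p" "0 \<le> r"
  shows "ennreal (r * (w p - measure (\<pi> p) (ball p r))) \<le> (\<integral>\<^sup>+ y. ennreal (dist p y) \<partial>\<pi> p)"
proof -
  note fin = transport_plan_finite_measure[OF plan \<open>p \<in> P\<close>]
  note sets = transport_plan_sets[OF plan \<open>p \<in> P\<close>]
  have "w p - measure (\<pi> p) (ball p r) = measure (\<pi> p) (UNIV - ball p r)"
    using finite_measure.finite_measure_compl[OF fin, of "ball p r"] sets
      transport_plan_space[OF plan \<open>p \<in> P\<close>] transport_plan_measure_UNIV[OF plan \<open>p \<in> P\<close> \<open>0 \<le> w p\<close>]
    by simp
  then have "ennreal (r * (w p - measure (\<pi> p) (ball p r)))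
      = (\<integral>\<^sup>+ y. ennreal r * indicator (UNIV - ball p r) y \<partial>\<pi> p)"
    using sets \<open>0 \<le> r\<close>
    by (simp add: nn_integral_cmult_indicator ennreal_mult finite_measure.emeasure_eq_measure[OF fin])
  also have "\<dots> \<le> (\<integral>\<^sup>+ y. ennreal (dist p y) \<partial>\<pi> p)"
    by (intro nn_integral_mono) (auto simp: indicator_def ennreal_leI)
  finally show ?thesis .
qed

lemma plan_cost_ge_mass_outside_balls:
  assumes plan: "transport_plan P w \<mu> \<pi>" and "finite P" "\<forall>p\<in>P. 0 \<le> w p" "0 \<le> r"
    and balls: "\<And>p. p \<in> P \<Longrightarrow> measure \<mu> (ball p r) \<le> b"
  shows "ennreal (r * ((\<Sum>p\<in>P. w p) - real (card P) * b)) \<le> plan_cost P \<pi>"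
proof -
  have escape: "measure (\<pi> p) (ball p r) \<le> min b (w p)" if "p \<in> P" for p
    using transport_plan_measure_le_target[OF plan \<open>finite P\<close> that, of "ball p r"] balls[OF that]
      finite_measure.bounded_measure[OF transport_plan_finite_measure[OF plan that], of "ball p r"]
      transport_plan_space[OF plan that] transport_plan_measure_UNIV[OF plan that] assms(3) that
    by auto
  have "r * ((\<Sum>p\<in>P. w p) - real (card P) * b) \<le> (\<Sum>p\<in>P. r * (w p - measure (\<pi> p) (ball p r)))"
    using escape \<open>0 \<le> r\<close>
    by (simp add: sum_distrib_left[symmetric] sum_subtractf mult_left_mono sum_bounded_above)
  then have "ennreal (r * ((\<Sum>p\<in>P. w p) - real (card P) * b))
      \<le> (\<Sum>p\<in>P. ennreal (r * (w p - measure (\<pi> p) (ball p r))))"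
    using escape \<open>0 \<le> r\<close> by (subst sum_ennreal) (auto intro: ennreal_leI)
  also have "\<dots> \<le> plan_cost P \<pi>"
    unfolding plan_cost_def using nn_integral_dist_ge_mass_outside_ball[OF plan] assms(3,4)
    by (intro sum_mono) auto
  finally show ?thesis .
qed

lemma emeasure_simplex_measure_eq_cell_weight:
  "emeasure (simplex_measure m V) (cube q) = ennreal (cell_weight m V q)"
  by (simp add: cell_weight_def finite_measure.emeasure_eq_measure[OF finite_measure_simplex_measure])

lemma nn_integral_constructed_plan_le:
  assumes "finite Q" "\<And>q. q \<in> Q \<Longrightarrow> 0 \<le> \<nu> p q"
    and dist: "\<And>q y. q \<in> Q \<Longrightarrow> y \<in> cube q \<Longrightarrow> dist p y \<le> a * dist p (t q) + e q"
    and "0 \<le> a" "\<And>q. 0 \<le> e q"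
  shows "(\<integral>\<^sup>+ y. ennreal (dist p y) \<partial>constructed_plan m V Q \<nu> p)
    \<le> ennreal (\<Sum>q\<in>Q. \<nu> p q * (a * dist p (t q) + e q))"
proof -
  let ?W = "cell_weight m V"
  have cell: "ennreal (\<nu> p q / ?W q) * (\<integral>\<^sup>+ y. ennreal (dist p y) * indicator (cube q) y \<partial>simplex_measure m V)
      \<le> ennreal (\<nu> p q * (a * dist p (t q) + e q))" if "q \<in> Q" for q
  proof -
    define b where "b = a * dist p (t q) + e q"
    have "0 \<le> b" "0 \<le> \<nu> p q" "0 \<le> ?W q"
      using assms(2,4,5) that by (auto simp: b_def cell_weight_def)
    have "(\<integral>\<^sup>+ y. ennreal (dist p y) * indicator (cube q) y \<partial>simplex_measure m V)
        \<le> (\<integral>\<^sup>+ y. ennreal b * indicator (cube q) y \<partial>simplex_measure m V)"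
      using dist[OF that] by (intro nn_integral_mono) (auto simp: b_def indicator_def ennreal_leI)
    also have "\<dots> = ennreal (b * ?W q)"
      using \<open>0 \<le> b\<close> by (simp add: nn_integral_cmult_indicator emeasure_simplex_measure_eq_cell_weight
          ennreal_mult')
    finally have "ennreal (\<nu> p q / ?W q) * (\<integral>\<^sup>+ y. ennreal (dist p y) * indicator (cube q) y \<partial>simplex_measure m V)
        \<le> ennreal (\<nu> p q / ?W q) * ennreal (b * ?W q)"
      by (rule mult_left_mono) simp
    also have "\<dots> = ennreal (\<nu> p q / ?W q * (b * ?W q))"
      using \<open>0 \<le> b\<close> \<open>0 \<le> \<nu> p q\<close> \<open>0 \<le> ?W q\<close> by (intro ennreal_mult[symmetric]) auto
    also have "\<dots> \<le> ennreal (\<nu> p q * b)"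
      \<comment> \<open>for a cell of weight 0 the junk value \<open>\<nu> p q / 0 = 0\<close> makes the left side vanish\<close>
      using \<open>0 \<le> b\<close> \<open>0 \<le> \<nu> p q\<close> by (cases "?W q = 0") (auto intro: ennreal_leI)
    finally show ?thesis by (simp add: b_def)
  qed
  have "(\<integral>\<^sup>+ y. ennreal (dist p y) \<partial>constructed_plan m V Q \<nu> p)
      = (\<Sum>q\<in>Q. ennreal (\<nu> p q / ?W q) * (\<integral>\<^sup>+ y. ennreal (dist p y) * indicator (cube q) y \<partial>simplex_measure m V))"
  proof -
    have "(\<integral>\<^sup>+ y. ennreal (dist p y) \<partial>constructed_plan m V Q \<nu> p)
        = (\<integral>\<^sup>+ y. (\<Sum>q\<in>Q. ennreal (\<nu> p q / ?W q) * (ennreal (dist p y) * indicator (cube q) y))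
            \<partial>simplex_measure m V)"
      unfolding constructed_plan_def by (simp add: nn_integral_density sum_distrib_left mult_ac)
    then show ?thesis
      by (simp add: nn_integral_sum nn_integral_cmult)
  qed
  also have "\<dots> \<le> (\<Sum>q\<in>Q. ennreal (\<nu> p q * (a * dist p (t q) + e q)))"
    using cell by (rule sum_mono)
  also have "\<dots> = ennreal (\<Sum>q\<in>Q. \<nu> p q * (a * dist p (t q) + e q))"
    using assms(2,4,5) by (intro sum_ennreal) auto
  finally show ?thesis .
qed

lemma plan_cost_constructed_plan_le:
  assumes "finite Q" and plan: "discrete_plan P w Q (cell_weight m V) \<nu>"
    and dist: "\<And>p q y. p \<in> P \<Longrightarrow> q \<in> Q \<Longrightarrow> y \<in> cube q \<Longrightarrow> dist p y \<le> a * dist p (t q) + e q"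
    and "0 \<le> a" "\<And>q. 0 \<le> e q"
  shows "plan_cost P (constructed_plan m V Q \<nu>)
    \<le> ennreal (a * discrete_cost P Q t \<nu> + (\<Sum>q\<in>Q. e q * cell_weight m V q))"
proof -
  have \<nu>_nonneg: "\<And>p q. p \<in> P \<Longrightarrow> q \<in> Q \<Longrightarrow> 0 \<le> \<nu> p q"
    using plan by (simp add: discrete_plan_def)
  have "plan_cost P (constructed_plan m V Q \<nu>)
      \<le> (\<Sum>p\<in>P. ennreal (\<Sum>q\<in>Q. \<nu> p q * (a * dist p (t q) + e q)))"
    unfolding plan_cost_def
    using nn_integral_constructed_plan_le[OF \<open>finite Q\<close> \<nu>_nonneg dist] assms(4,5)
    by (intro sum_mono) auto
  also have "\<dots> = ennreal (\<Sum>p\<in>P. \<Sum>q\<in>Q. \<nu> p q * (a * dist p (t q) + e q))"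
    using \<nu>_nonneg assms(4,5) by (intro sum_ennreal sum_nonneg) auto
  also have "(\<Sum>p\<in>P. \<Sum>q\<in>Q. \<nu> p q * (a * dist p (t q) + e q))
      = a * discrete_cost P Q t \<nu> + (\<Sum>q\<in>Q. e q * (\<Sum>p\<in>P. \<nu> p q))"
    by (simp add: discrete_cost_def algebra_simps sum.distrib sum_distrib_left sum_distrib_right
        sum.swap[of _ P])
  also have "\<dots> = a * discrete_cost P Q t \<nu> + (\<Sum>q\<in>Q. e q * cell_weight m V q)"
    using plan by (simp add: discrete_plan_def)
  finally show ?thesis .
qed

lemma mult_power_div_powr_inverse:
  fixes N x :: real
  assumes "0 < n" "0 < N"
  shows "N * (x / N powr (1 / real n)) ^ n = x ^ n"
proof -
  have "(N powr (1 / real n)) ^ n = N"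
    using assms by (simp flip: root_powr_inverse)
  then show ?thesis
    using assms by (simp add: power_divide)
qed

lemma cell_slack_sum_le_balls:
  fixes P :: "'a::euclidean_space set"
  assumes "finite P" "finite Q" "disjoint_family_on cube Q" "\<forall>q\<in>Q. stop_rule P m \<delta> q" "0 \<le> \<delta>"
  defines "\<epsilon> \<equiv> stop_radius P m \<delta>"
  shows "(\<Sum>q\<in>Q. cell_slack P m \<delta> q * cell_weight m V q)
    \<le> 2 * \<epsilon> * (real (card P * m) * (2 * \<epsilon>) ^ DIM('a))"
proof -
  let ?\<mu> = "simplex_measure m V"
  define Q' where "Q' = {q\<in>Q. \<not> separated_cell P \<delta> q}"
  have "0 \<le> \<epsilon>"
    using \<open>0 \<le> \<delta>\<close> by (simp add: \<epsilon>_def stop_radius_nonneg)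
  have "(\<Sum>q\<in>Q. cell_slack P m \<delta> q * cell_weight m V q)
      = (\<Sum>q\<in>Q. if \<not> separated_cell P \<delta> q then 2 * \<epsilon> * measure ?\<mu> (cube q) else 0)"
    by (intro sum.cong) (auto simp: cell_slack_def \<epsilon>_def cell_weight_def)
  also have "\<dots> = 2 * \<epsilon> * (\<Sum>q\<in>Q'. measure ?\<mu> (cube q))"
    unfolding Q'_def sum_distrib_left using \<open>finite Q\<close> by (simp add: sum.inter_filter)
  also have "(\<Sum>q\<in>Q'. measure ?\<mu> (cube q)) = measure ?\<mu> (\<Union>q\<in>Q'. cube q)"
    using \<open>finite Q\<close> disjoint_family_on_mono[OF _ \<open>disjoint_family_on cube Q\<close>, of Q']
    by (intro finite_measure.finite_measure_finite_Union[symmetric] finite_measure_simplex_measure)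
      (auto simp: Q'_def)
  also have "\<dots> \<le> measure ?\<mu> (\<Union>p\<in>P. cball p \<epsilon>)"
  proof (intro finite_measure.finite_measure_mono[OF finite_measure_simplex_measure])
    show "(\<Union>q\<in>Q'. cube q) \<subseteq> (\<Union>p\<in>P. cball p \<epsilon>)"
      using assms(4) by (force simp: Q'_def stop_rule_iff \<epsilon>_def)
    show "(\<Union>p\<in>P. cball p \<epsilon>) \<in> sets ?\<mu>"
      using \<open>finite P\<close> by auto
  qed
  also have "\<dots> \<le> (\<Sum>p\<in>P. measure ?\<mu> (cball p \<epsilon>))"
    using \<open>finite P\<close> by (intro finite_measure.finite_measure_subadditive_finite finite_measure_simplex_measure) auto
  also have "\<dots> \<le> (\<Sum>p\<in>P. real m * (2 * \<epsilon>) ^ DIM('a))"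
    using \<open>0 \<le> \<epsilon>\<close> by (intro sum_mono measure_simplex_measure_cball_le)
  finally show ?thesis
    using \<open>0 \<le> \<epsilon>\<close> by (simp add: mult_left_mono mult.assoc)
qed

lemma cell_slack_sum_le:
  fixes P :: "'a::euclidean_space set"
  assumes "finite P" "finite Q" "disjoint_family_on cube Q" "\<forall>q\<in>Q. stop_rule P m \<delta> q"
    and "0 \<le> \<delta>" "\<delta> \<le> 1/2" "0 < card P * m"
  shows "(\<Sum>q\<in>Q. cell_slack P m \<delta> q * cell_weight m V q)
    \<le> 4 * \<delta>^2 / real (card P * m) powr (1 / real DIM('a))"
proof -
  define \<rho> where "\<rho> = real (card P * m) powr (1 / real DIM('a))"
  have "0 < \<rho>"
    using assms(7) by (simp add: \<rho>_def)
  have "real (card P * m) * (2 * stop_radius P m \<delta>) ^ DIM('a) = (2 * \<delta>) ^ DIM('a)"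
    using mult_power_div_powr_inverse[of "DIM('a)" "real (card P * m)" "2 * \<delta>"] assms(7)
    by (simp add: stop_radius_def)
  also have "\<dots> \<le> (2 * \<delta>) ^ 1"
    using assms(5,6) by (intro power_decreasing) (auto simp: Suc_leI)
  finally have "2 * stop_radius P m \<delta> * (real (card P * m) * (2 * stop_radius P m \<delta>) ^ DIM('a))
      \<le> 2 * stop_radius P m \<delta> * (2 * \<delta>)"
    using assms(5) by (intro mult_left_mono) (auto simp: stop_radius_nonneg)
  also have "\<dots> = 4 * \<delta>^2 / \<rho>"
    by (simp add: stop_radius_def \<rho>_def power2_eq_square)
  finally have "2 * stop_radius P m \<delta> * (real (card P * m) * (2 * stop_radius P m \<delta>) ^ DIM('a))
      \<le> 4 * \<delta>^2 / \<rho>" .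
  with cell_slack_sum_le_balls[OF assms(1-5), of V] show ?thesis
    unfolding \<rho>_def by (rule order_trans)
qed

lemma plan_cost_simplex_measure_ge:
  fixes P :: "'a::euclidean_space set"
  assumes plan: "transport_plan P w (simplex_measure m V) \<pi>"
    and "finite P" "\<forall>p\<in>P. 0 \<le> w p" "(\<Sum>p\<in>P. w p) = 1" "0 < card P * m"
  shows "ennreal (1 / (8 * real (card P * m) powr (1 / real DIM('a)))) \<le> plan_cost P \<pi>"
proof -
  define \<rho> where "\<rho> = real (card P * m) powr (1 / real DIM('a))"
  define r where "r = 1 / (4 * \<rho>)"
  have "0 < \<rho>" "0 < r"
    using assms(5) by (simp_all add: \<rho>_def r_def)
  have balls: "measure (simplex_measure m V) (ball p r) \<le> real m * (2 * r) ^ DIM('a)" for p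
  proof -
    have "measure (simplex_measure m V) (ball p r) \<le> measure (simplex_measure m V) (cball p r)"
      by (rule finite_measure.finite_measure_mono[OF finite_measure_simplex_measure ball_subset_cball]) simp
    also have "\<dots> \<le> real m * (2 * r) ^ DIM('a)"
      using \<open>0 < r\<close> by (intro measure_simplex_measure_cball_le) simp
    finally show ?thesis .
  qed
  have "real (card P) * (real m * (2 * r) ^ DIM('a)) = (1 / 2) ^ DIM('a)"
    using mult_power_div_powr_inverse[of "DIM('a)" "real (card P * m)" "1 / 2"] assms(5)
    by (simp add: r_def \<rho>_def mult.assoc)
  also have "\<dots> \<le> (1 / 2) ^ 1"
    by (intro power_decreasing) (auto simp: Suc_leI)
  finally have "1 / (8 * \<rho>) \<le> r * ((\<Sum>p\<in>P. w p) - real (card P) * (real m * (2 * r) ^ DIM('a)))"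
    using \<open>0 < \<rho>\<close> assms(4) by (simp add: r_def field_simps)
  then have "ennreal (1 / (8 * \<rho>))
      \<le> ennreal (r * ((\<Sum>p\<in>P. w p) - real (card P) * (real m * (2 * r) ^ DIM('a))))"
    by (rule ennreal_leI)
  also have "\<dots> \<le> plan_cost P \<pi>"
    using plan_cost_ge_mass_outside_balls[OF plan assms(2,3) _ balls] \<open>0 < r\<close> by simp
  finally show ?thesis
    by (simp add: \<rho>_def)
qed

lemma approximation_ratio_bound:
  fixes X C :: ennreal and D E \<rho> \<delta> :: real
  assumes X: "X \<le> ennreal ((1 + \<delta>) * D + E)" and D: "ennreal D \<le> ennreal (1 + \<delta>) * C + ennreal E"
    and C: "ennreal (1 / (8 * \<rho>)) \<le> C" and E: "0 \<le> E" "E \<le> 4 * \<delta>^2 / \<rho>"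
    and "0 < \<rho>" "0 < \<delta>" "\<delta> \<le> 1/5"
  shows "X \<le> ennreal (1 + 21 * \<delta>) * C"
proof (cases "C = \<infinity>")
  case True
  then show ?thesis
    using \<open>0 < \<delta>\<close> by (simp add: ennreal_mult_top)
next
  case False
  then obtain c where c: "C = ennreal c" "0 \<le> c"
    by (cases C) auto
  have "1 / \<rho> \<le> 8 * c"
    using C c \<open>0 < \<rho>\<close> by (simp add: field_simps)
  then have E': "E \<le> 32 * \<delta>^2 * c"
    using E(2) mult_left_mono[of "1 / \<rho>" "8 * c" "4 * \<delta>^2"] by simp
  have "ennreal D \<le> ennreal ((1 + \<delta>) * c + E)"
    using D c \<open>0 < \<delta>\<close> E(1) by (simp add: ennreal_mult)
  moreover have "0 \<le> (1 + \<delta>) * c + E"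
    using c(2) \<open>0 < \<delta>\<close> E(1) by simp
  ultimately have D': "D \<le> (1 + \<delta>) * c + E"
    using ennreal_le_iff by blast
  have "65 * \<delta> + 32 * \<delta>^2 \<le> 19"
    using \<open>0 < \<delta>\<close> \<open>\<delta> \<le> 1/5\<close> mult_mono[of \<delta> "1/5" \<delta> "1/5"] by (simp add: power2_eq_square)
  then have "(1 + \<delta>)^2 + (2 + \<delta>) * (32 * \<delta>^2) \<le> 1 + 21 * \<delta>"
    using \<open>0 < \<delta>\<close> mult_left_mono[of "65 * \<delta> + 32 * \<delta>^2" 19 \<delta>]
    by (simp add: power2_eq_square algebra_simps)
  then have "(1 + \<delta>) * D + E \<le> (1 + 21 * \<delta>) * c"
    using D' E' c(2) \<open>0 < \<delta>\<close> mult_left_mono[of "(1 + \<delta>)^2 + (2 + \<delta>) * (32 * \<delta>^2)" "1 + 21 * \<delta>" c]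
      mult_left_mono[OF D', of "1 + \<delta>"] mult_left_mono[OF E', of "2 + \<delta>"]
    by (simp add: power2_eq_square algebra_simps)
  then have "X \<le> ennreal ((1 + 21 * \<delta>) * c)"
    using X by (meson ennreal_leI order_trans)
  then show ?thesis
    using c \<open>0 < \<delta>\<close> by (simp add: ennreal_mult)
qed

theorem plan_cost_constructed_plan_approximation:
  fixes P :: "'a::euclidean_space set"
  assumes "finite P" "\<forall>p\<in>P. 0 \<le> w p" "(\<Sum>p\<in>P. w p) = 1" "0 < m" "0 < \<delta>" "\<delta> \<le> 1/5"
    and tQ: "\<forall>q\<in>final_cells P m V \<Delta> org \<delta>. t q \<in> cube q"
    and nu_plan: "discrete_plan P w (final_cells P m V \<Delta> org \<delta>) (cell_weight m V) \<nu>"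
    and nu_opt: "\<forall>\<nu>'. discrete_plan P w (final_cells P m V \<Delta> org \<delta>) (cell_weight m V) \<nu>' \<longrightarrow>
        discrete_cost P (final_cells P m V \<Delta> org \<delta>) t \<nu> \<le> discrete_cost P (final_cells P m V \<Delta> org \<delta>) t \<nu>'"
    and plan: "transport_plan P w (simplex_measure m V) \<pi>"
  shows "plan_cost P (constructed_plan m V (final_cells P m V \<Delta> org \<delta>) \<nu>)
           \<le> ennreal (1 + 21 * \<delta>) * plan_cost P \<pi>"
proof -
  let ?Q = "final_cells P m V \<Delta> org \<delta>"
  let ?E = "\<Sum>q\<in>?Q. cell_slack P m \<delta> q * cell_weight m V q"
  obtain p where "p \<in> P" "w p \<noteq> 0"
    using \<open>(\<Sum>p\<in>P. w p) = 1\<close> by (metis sum.neutral zero_neq_one)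
  then have "finite ?Q" "0 < card P * m"
    using discrete_plan_finite_target[OF nu_plan] \<open>finite P\<close> \<open>0 < m\<close> card_gt_0_iff by auto
  have stop: "\<forall>q\<in>?Q. stop_rule P m \<delta> q"
    by (auto simp: final_cells_def)
  have dist: "dist p y \<le> (1 + \<delta>) * dist p y' + cell_slack P m \<delta> q"
    if "p \<in> P" "q \<in> ?Q" "y \<in> cube q" "y' \<in> cube q" for p q y y'
    using stop_rule_dist_le[of P m \<delta> q p y y'] stop that \<open>0 < \<delta>\<close> by auto
  have slack: "0 \<le> cell_slack P m \<delta> q" for q
    using \<open>0 < \<delta>\<close> by (simp add: cell_slack_nonneg)
  have X: "plan_cost P (constructed_plan m V ?Q \<nu>) \<le> ennreal ((1 + \<delta>) * discrete_cost P ?Q t \<nu> + ?E)"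
    using plan_cost_constructed_plan_le[OF \<open>finite ?Q\<close> nu_plan dist[OF _ _ _ tQ[rule_format]] _ slack]
      \<open>0 < \<delta>\<close> by simp
  have D: "ennreal (discrete_cost P ?Q t \<nu>) \<le> ennreal (1 + \<delta>) * plan_cost P \<pi> + ennreal ?E"
  proof -
    have "discrete_plan P w ?Q (cell_weight m V) (\<lambda>p q. measure (\<pi> p) (cube q))"
      using discrete_plan_of_transport_plan[OF plan \<open>finite P\<close> \<open>finite ?Q\<close> assms(2) _ final_cells_disjoint]
        discrete_plan_total_weight[OF nu_plan] by (simp add: cell_weight_def[abs_def])
    then have "ennreal (discrete_cost P ?Q t \<nu>) \<le> ennreal (discrete_cost P ?Q t (\<lambda>p q. measure (\<pi> p) (cube q)))"
      using nu_opt by (simp add: ennreal_leI)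
    also have "\<dots> \<le> ennreal (1 + \<delta>) * plan_cost P \<pi> + ennreal ?E"
      using discrete_cost_of_transport_plan_le[OF plan \<open>finite ?Q\<close> _ final_cells_disjoint
          dist[OF _ _ tQ[rule_format]] _ slack] \<open>0 < \<delta>\<close>
      by (simp add: cell_weight_def)
    finally show ?thesis .
  qed
  have C: "ennreal (1 / (8 * real (card P * m) powr (1 / real DIM('a)))) \<le> plan_cost P \<pi>"
    using plan_cost_simplex_measure_ge[OF plan] assms(1-3) \<open>0 < card P * m\<close> by blast
  have E: "?E \<le> 4 * \<delta>^2 / real (card P * m) powr (1 / real DIM('a))"
    using \<open>0 < \<delta>\<close> \<open>\<delta> \<le> 1/5\<close>
    by (intro cell_slack_sum_le[OF \<open>finite P\<close> \<open>finite ?Q\<close> final_cells_disjoint stop]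
        \<open>0 < card P * m\<close>) auto
  have E_nonneg: "0 \<le> ?E"
    using \<open>0 < \<delta>\<close> by (intro sum_nonneg mult_nonneg_nonneg cell_slack_nonneg) (auto simp: cell_weight_def)
  show ?thesis
    using approximation_ratio_bound[OF X D C E_nonneg E] \<open>0 < card P * m\<close> \<open>0 < \<delta>\<close> \<open>\<delta> \<le> 1/5\<close>
    by simp
qed

theorem theorem9:
  fixes P :: "'a::euclidean_space set" and w :: "'a \<Rightarrow> real"
    and m :: nat and V :: "nat \<Rightarrow> nat \<Rightarrow> 'a"
    and \<Delta> \<delta> :: real and org :: 'a
    and t :: "'a \<times> real \<Rightarrow> 'a" and \<nu> :: "'a \<Rightarrow> 'a \<times> real \<Rightarrow> real"
    and \<tau>star :: "'a \<Rightarrow> 'a measure"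
  assumes finP: "finite P"
    and wpos: "\<forall>p\<in>P. 0 < w p"
    and wsum: "(\<Sum>p\<in>P. w p) = 1"
    and nondeg: "\<forall>j<m. inj_on (V j) {..DIM('a)} \<and> \<not> affine_dependent (V j ` {..DIM('a)})"
    and vol: "(\<Sum>j<m. measure lebesgue (simplex_of V j)) = 1"
    and Delta: "\<Delta> = Max {dist (V j i) (V j k) | j i k. j < m \<and> i \<le> DIM('a) \<and> k \<le> DIM('a)}"
    and delta: "0 < \<delta>" "\<delta> \<le> 1/5"
    and tQ: "\<forall>q\<in>final_cells P m V \<Delta> org \<delta>. t q \<in> cube q"
    and nu_plan: "discrete_plan P w (final_cells P m V \<Delta> org \<delta>) (cell_weight m V) \<nu>"
    and nu_opt: "\<forall>\<nu>'. discrete_plan P w (final_cells P m V \<Delta> org \<delta>) (cell_weight m V) \<nu>' \<longrightarrow>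
        discrete_cost P (final_cells P m V \<Delta> org \<delta>) t \<nu> \<le> discrete_cost P (final_cells P m V \<Delta> org \<delta>) t \<nu>'"
    and star_plan: "transport_plan P w (simplex_measure m V) \<tau>star"
    and star_opt: "\<forall>\<pi>. transport_plan P w (simplex_measure m V) \<pi> \<longrightarrow>
        plan_cost P \<tau>star \<le> plan_cost P \<pi>"
  shows "plan_cost P (constructed_plan m V (final_cells P m V \<Delta> org \<delta>) \<nu>)
           \<le> ennreal (1 + 21 * \<delta>) * plan_cost P \<tau>star"
proof -
  have "0 < m"
    using vol by (cases m) auto
  then show ?thesis
    using plan_cost_constructed_plan_approximation[OF finP _ wsum _ delta tQ nu_plan nu_opt star_plan] wpos
    by (simp add: less_imp_le)
qed

end
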